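(* Let $q\ge 1$ and, for each $k\in\{1,\dots,q\}$, let $M_k\ge 2$ be an integer and $0=x_{k,0}<x_{k,1}<\dots<x_{k,M_k}=1$. Let data values $z_{(1,j_1)\cdots(q,j_q)}\in\mathbb{R}$ be given for all $(j_1,\dots,j_q)\in\prod_{k=1}^q\{0,1,\dots,M_k\}$. Let the maps $u_{k,i}$ and the function $\eta$ be as in the context, and for each $(i_1,\dots,i_q)\in\prod_{k=1}^q\{1,\dots,M_k\}$ let $F_{i_1\cdots i_q}:I^q\times\mathbb{R}\to\mathbb{R}$ be continuous and satisfy: (1) $F_{i_1\cdots i_q}\big(x_{1,k_1},\dots,x_{q,k_q},z_{(1,k_1)\cdots(q,k_q)}\big)=z_{(1,\eta(i_1,k_1))\cdots(q,\eta(i_q,k_q))}$ for all $(k_1,\dots,k_q)\in\prod_{j=1}^q\{0,M_j\}$; (2) there is $0<\gamma_{i_1\cdots i_q}<1$ with $|F_{i_1\cdots i_q}(x,z^* )-F_{i_1\cdots i_q}(x,z^{**})|\le\gamma_{i_1\cdots i_q}|z^*-z^{**}|$ for all $x\in I^q$, $z^*,z^{**}\in\mathbb{R}$; (3) (matching conditions) for every $k\in\{1,\dots,q\}$, every $i_k\in\{1,\dots,M_k-1\}$ and every choice of $i_j\in\{1,\dots,M_j\}$ for $j\ne k$, putting $x_k^*=u_{k,i_k}^{-1}(x_{k,i_k})=u_{k,i_k+1}^{-1}(x_{k,i_k})$, one has $F_{i_1\cdots i_{k-1}\,i_k\,i_{k+1}\cdots i_q}(x_1,\dots,x_{k-1},x_k^*,x_{k+1},\dots,x_q,z)=F_{i_1\cdots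 i_{k-1}\,(i_k+1)\,i_{k+1}\cdots i_q}(x_1,\dots,x_{k-1},x_k^*,x_{k+1},\dots,x_q,z)$ for all $x_j\in I$ ($j\neq k$) and $z\in\mathbb{R}$. Define $\Omega_{i_1\cdots i_q}:I^q\times\mathbb{R}\to I^q\times\mathbb{R}$ by $\Omega_{i_1\cdots i_q}(x_1,\dots,x_q,z)=\big(u_{1,i_1}(x_1),\dots,u_{q,i_q}(x_q),F_{i_1\cdots i_q}(x_1,\dots,x_q,z)\big)$. Then there is a unique continuous function $\mathcal{A}:I^q\to\mathbb{R}$ whose graph $H=\{(x,\mathcal{A}(x)):x\in I^q\}$ satisfies $H=\bigcup_{(i_1,\dots,i_q)\in\prod_k\{1,\dots,M_k\}}\Omega_{i_1\cdots i_q}(H)$; moreover $\mathcal{A}(x_{1,j_1},\dots,x_{q,j_q})=z_{(1,j_1)\cdots(q,j_q)}$ for all $(j_1,\dots,j_q)\in\prod_{k=1}^q\{0,\dots,M_k\}$.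
   Context: $I=[0,1]$, $I^q$ is the $q$-fold Cartesian product. For $k\in\{1,\dots,q\}$ and $i\in\{1,\dots,M_k\}$, $I_{k,i}=[x_{k,i-1},x_{k,i}]$ and $u_{k,i}:I\to I_{k,i}$ is a homeomorphism onto $I_{k,i}$ which is a contraction ($|u_{k,i}(x)-u_{k,i}(y)|\le\mu_{k,i}|x-y|$ with $0<\mu_{k,i}<1$) and satisfies $u_{k,i}(0)=x_{k,i-1}$, $u_{k,i}(1)=x_{k,i}$ if $i$ is odd, and $u_{k,i}(0)=x_{k,i}$, $u_{k,i}(1)=x_{k,i-1}$ if $i$ is even. The function $\eta$ is defined on pairs $(i,e)$ with $i$ an integer and $e\in\{0,M_1,\dots,M_q\}$ by: if $i$ is odd, $\eta(i,0)=i-1$ and $\eta(i,M_j)=i$; if $i$ is even, $\eta(i,0)=i$ and $\eta(i,M_j)=i-1$. *)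

theory Defs
  imports "HOL-Analysis.Analysis"
begin

definition cube :: "nat \<Rightarrow> (nat \<Rightarrow> real) set" where
  "cube q = PiE {1..q} (\<lambda>_. {0..1})"

text \<open>The function eta; the second argument is either 0 or some M_j (M_j \<ge> 2).\<close>
definition eta :: "nat \<Rightarrow> nat \<Rightarrow> nat" where
  "eta i e = (if odd i then (if e = 0 then i - 1 else i) else (if e = 0 then i else i - 1))"

end

theory Submission
  imports Defs
begin

(* The graph of A is invariant under the maps Omega_i exactly when A is a fixed point of the
   Read-Bajraktarevic operator, (RB a)(U_i x) = F_i(x, a x), where U_i = (u_{1,i_1}, ..., u_{q,i_q})
   maps I^q onto the cell indexed by i. The matching conditions make RB well defined on faces
   shared by neighbouring cells, so by pasting over the finitely many closed cells RB preserves
   continuity; the uniform contractivity of the F_i in their last argument makes it a contraction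
   for the sup metric, and Banach's theorem yields the unique continuous fixed point.
   For interpolation, every grid node is the image under some U_i of a corner of I^q, and every
   corner arises in at most one further step from a corner that is fixed by its own map; at such
   a corner both the value of A and the datum z are fixed points of a contraction, so they agree. *)

lemma PiE_eq_PiE_UNIV: "PiE I S = PiE UNIV (\<lambda>k. if k \<in> I then S k else {undefined})"
  by (auto simp: PiE_iff extensional_def split: if_splits)

lemma closed_PiE:
  fixes S :: "'i \<Rightarrow> 'a::t1_space set"
  assumes "\<And>k. k \<in> I \<Longrightarrow> closed (S k)"
  shows "closed (PiE I S)"
proof -
  have "closedin (product_topology (\<lambda>_. euclidean) UNIV)
      (PiE UNIV (\<lambda>k. if k \<in> I then S k else {undefined}))"
    using assms by (auto simp: closedin_product_topology)
  then show ?thesis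
    by (simp add: PiE_eq_PiE_UNIV[of I] euclidean_product_topology)
qed

lemma compact_PiE:
  fixes S :: "'i \<Rightarrow> 'a::topological_space set"
  assumes "\<And>k. k \<in> I \<Longrightarrow> compact (S k)"
  shows "compact (PiE I S)"
proof -
  have "compactin (product_topology (\<lambda>_. euclidean) UNIV)
      (PiE UNIV (\<lambda>k. if k \<in> I then S k else {undefined}))"
    using assms by (auto simp: compactin_PiE)
  then show ?thesis
    by (simp add: PiE_eq_PiE_UNIV[of I] euclidean_product_topology)
qed

lemma compact_cube: "compact (cube q)"
  unfolding cube_def by (rule compact_PiE) simp

lemma continuous_on_restrict_PiE:
  fixes f :: "'i \<Rightarrow> 'a::topological_space \<Rightarrow> 'b::topological_space"
  assumes "\<And>k. k \<in> I \<Longrightarrow> continuous_on (S k) (f k)"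
  shows "continuous_on (PiE I S) (\<lambda>x. restrict (\<lambda>k. f k (x k)) I)"
proof (rule continuous_on_coordinatewise_then_product)
  fix k
  show "continuous_on (PiE I S) (\<lambda>x. restrict (\<lambda>k. f k (x k)) I k)"
  proof (cases "k \<in> I")
    case True
    have "continuous_on (PiE I S) (\<lambda>x. f k (x k))"
      by (rule continuous_on_compose2[OF assms[OF True]])
        (use True in \<open>auto intro: continuous_on_subset[OF continuous_on_product_coordinates]\<close>)
    then show ?thesis using True by simp
  qed simp
qed

lemma homeomorphism_PiE:
  assumes "\<And>k. k \<in> I \<Longrightarrow> homeomorphism (S k) (T k) (f k) (g k)"
  shows "homeomorphism (PiE I S) (PiE I T)
           (\<lambda>x. restrict (\<lambda>k. f k (x k)) I) (\<lambda>y. restrict (\<lambda>k. g k (y k)) I)"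
proof (rule homeomorphismI)
  show "continuous_on (PiE I S) (\<lambda>x. restrict (\<lambda>k. f k (x k)) I)"
    "continuous_on (PiE I T) (\<lambda>y. restrict (\<lambda>k. g k (y k)) I)"
    using assms by (auto intro!: continuous_on_restrict_PiE dest: homeomorphism_cont1 homeomorphism_cont2)
  show "(\<lambda>x. restrict (\<lambda>k. f k (x k)) I) ` PiE I S \<subseteq> PiE I T"
    "(\<lambda>y. restrict (\<lambda>k. g k (y k)) I) ` PiE I T \<subseteq> PiE I S"
    using assms by (fastforce simp: homeomorphism_def)+
  show "restrict (\<lambda>k. g k (restrict (\<lambda>k. f k (x k)) I k)) I = x" if "x \<in> PiE I S" for x
    using that assms by (force simp: PiE_iff extensional_def homeomorphism_def)
  show "restrict (\<lambda>k. f k (restrict (\<lambda>k. g k (y k)) I k)) I = y" if "y \<in> PiE I T" for y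
    using that assms by (force simp: PiE_iff extensional_def homeomorphism_def)
qed

lemma homeomorphism_the_inv_into:
  assumes "homeomorphism S T f g"
  shows "homeomorphism S T f (the_inv_into S f)"
proof (rule homeomorphism_cong[OF assms refl refl refl])
  fix y assume "y \<in> T"
  then show "the_inv_into S f y = g y"
    using assms by (metis homeomorphism_apply1 homeomorphism_apply2 homeomorphism_image2
        image_eqI inj_on_inverseI the_inv_into_f_f)
qed

lemma mspace_cfunspace_compact:
  fixes C :: "'a::topological_space set"
  assumes "compact C"
  shows "mspace (cfunspace (top_of_set C) (euclidean_metric :: 'b::metric_space metric)) =
    {A. A \<in> extensional C \<and> continuous_on C A}"
  using assms
  by (auto simp: compactin_mspace_cfunspace compactin_subtopology
      intro: compact_imp_bounded compact_continuous_image)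

lemma mcomplete_cfunspace_euclidean:
  "mcomplete_of (cfunspace X (euclidean_metric :: 'b::complete_space metric))"
  using Met_TC.mcomplete_cfunspace[of X] complete_UNIV
  by (simp add: euclidean_metric_def Met_TC.Self_def)

lemma continuous_fixpoint_of_contraction:
  fixes T :: "('a::topological_space \<Rightarrow> 'b::complete_space) \<Rightarrow> 'a \<Rightarrow> 'b"
  assumes "compact C"
    and ext: "\<And>a. T a \<in> extensional C"
    and cont: "\<And>a. continuous_on C a \<Longrightarrow> continuous_on C (T a)"
    and \<sigma>: "\<sigma> \<in> C \<rightarrow> C" and g: "0 \<le> g" "g < 1"
    and contr: "\<And>a b y. y \<in> C \<Longrightarrow> dist (T a y) (T b y) \<le> g * dist (a (\<sigma> y)) (b (\<sigma> y))"
  shows "\<exists>!A. A \<in> extensional C \<and> continuous_on C A \<and> T A = A"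
proof -
  define m where "m = cfunspace (top_of_set C) (euclidean_metric :: 'b metric)"
  interpret Metric_space "mspace m" "mdist m"
    by (rule Metric_space_mspace_mdist)
  have space: "mspace m = {A. A \<in> extensional C \<and> continuous_on C A}"
    unfolding m_def using \<open>compact C\<close> by (rule mspace_cfunspace_compact)
  have complete: mcomplete
    using mcomplete_cfunspace_euclidean[of "top_of_set C"] by (simp only: m_def mcomplete_of_def)
  have maps: "T \<in> mspace m \<rightarrow> mspace m"
    using ext cont by (auto simp: space)
  have lipschitz: "mdist m (T a) (T b) \<le> g * mdist m a b" if "a \<in> mspace m" "b \<in> mspace m" for a b
    unfolding m_def
  proof (rule mdist_cfunspace_le)
    show "0 \<le> g * mdist (cfunspace (top_of_set C) euclidean_metric) a b"
      using g by simp
    fix y assume y: "y \<in> topspace (top_of_set C)"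
    have "dist (a (\<sigma> y)) (b (\<sigma> y)) \<le> mdist m a b"
      using mdist_cfunspace_imp_mdist_le[of a "top_of_set C" euclidean_metric b _ "\<sigma> y"] that \<sigma> y
      by (force simp: m_def)
    then show "mdist euclidean_metric (T a y) (T b y) \<le> g * mdist (cfunspace (top_of_set C) euclidean_metric) a b"
      using contr[of y a b] g y by (auto simp: m_def intro: order_trans mult_left_mono)
  qed
  have "restrict (\<lambda>_. undefined) C \<in> mspace m"
    by (simp add: space)
  then obtain A where A: "A \<in> mspace m" "T A = A"
    using Banach_fixedpoint_thm[OF complete _ maps g(2) lipschitz] by blast
  show ?thesis
  proof (rule ex1I)
    show "A \<in> extensional C \<and> continuous_on C A \<and> T A = A" using A by (simp add: space)
    fix B assume "B \<in> extensional C \<and> continuous_on C B \<and> T B = B"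
    then show "B = A"
      using contraction_imp_unique_fixpoint[OF _ A(2) maps g(2) lipschitz] A(1) by (simp add: space)
  qed
qed

lemma graph_eq_Union_image_iff:
  assumes cover: "(\<Union>i\<in>I. U i ` C) = C"
  shows "(\<lambda>x. (x, A x)) ` C = (\<Union>i\<in>I. (\<lambda>(x, w). (U i x, F i x w)) ` (\<lambda>x. (x, A x)) ` C)
    \<longleftrightarrow> (\<forall>i\<in>I. \<forall>x\<in>C. A (U i x) = F i x (A x))" (is "?graph = ?images \<longleftrightarrow> _")
proof
  assume eq: "?graph = ?images"
  show "\<forall>i\<in>I. \<forall>x\<in>C. A (U i x) = F i x (A x)"
  proof (intro ballI)
    fix i x assume i: "i \<in> I" and x: "x \<in> C"
    have "(U i x, F i x (A x)) \<in> ?images"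
      using x by (intro UN_I[OF i] image_eqI[where x = "(x, A x)"]) auto
    then have "(U i x, F i x (A x)) \<in> ?graph"
      by (subst eq)
    then show "A (U i x) = F i x (A x)" by auto
  qed
next
  assume fe: "\<forall>i\<in>I. \<forall>x\<in>C. A (U i x) = F i x (A x)"
  show "?graph = ?images"
  proof
    show "?graph \<subseteq> ?images"
    proof
      fix p assume "p \<in> ?graph"
      then obtain y where "y \<in> C" and p: "p = (y, A y)" by blast
      then have "y \<in> (\<Union>i\<in>I. U i ` C)"
        by (simp only: cover)
      then obtain i x where i: "i \<in> I" and x: "x \<in> C" and y: "y = U i x"
        by blast
      show "p \<in> ?images"
        using p y fe i x by (intro UN_I[OF i] image_eqI[where x = "(x, A x)"]) auto
    qed
    show "?images \<subseteq> ?graph"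
    proof
      fix p assume "p \<in> ?images"
      then obtain i x where i: "i \<in> I" and x: "x \<in> C" and p: "p = (U i x, F i x (A x))"
        by auto
      have "U i x \<in> (\<Union>i\<in>I. U i ` C)" using i x by blast
      then have "U i x \<in> C" by (simp only: cover)
      then show "p \<in> ?graph" using p fe i x by auto
    qed
  qed
qed

lemma eta_max_1_parity: "m \<noteq> 0 \<Longrightarrow> eta (max 1 j) (if odd j then m else 0) = j"
  by (cases "j = 0") (auto simp: eta_def max_def)

locale grid_maps =
  fixes q :: nat
    and M :: "nat \<Rightarrow> nat"
    and xg :: "nat \<Rightarrow> nat \<Rightarrow> real"
    and u :: "nat \<Rightarrow> nat \<Rightarrow> real \<Rightarrow> real"
  assumes M: "\<And>k. k \<in> {1..q} \<Longrightarrow> M k \<ge> 2"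
    and grid0: "\<And>k. k \<in> {1..q} \<Longrightarrow> xg k 0 = 0"
    and grid1: "\<And>k. k \<in> {1..q} \<Longrightarrow> xg k (M k) = 1"
    and grid_mono: "\<And>k i. k \<in> {1..q} \<Longrightarrow> i < M k \<Longrightarrow> xg k i < xg k (Suc i)"
    and u_homeo: "\<And>k i. k \<in> {1..q} \<Longrightarrow> i \<in> {1..M k} \<Longrightarrow>
        \<exists>g. homeomorphism {0..1} {xg k (i - 1)..xg k i} (u k i) g"
    and u_odd: "\<And>k i. k \<in> {1..q} \<Longrightarrow> i \<in> {1..M k} \<Longrightarrow> odd i \<Longrightarrow>
        u k i 0 = xg k (i - 1) \<and> u k i 1 = xg k i"
    and u_even: "\<And>k i. k \<in> {1..q} \<Longrightarrow> i \<in> {1..M k} \<Longrightarrow> even i \<Longrightarrow>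
        u k i 0 = xg k i \<and> u k i 1 = xg k (i - 1)"
begin

abbreviation cell_indices :: "(nat \<Rightarrow> nat) set" where
  "cell_indices \<equiv> PiE {1..q} (\<lambda>k. {1..M k})"

definition cell :: "(nat \<Rightarrow> nat) \<Rightarrow> (nat \<Rightarrow> real) set" where
  "cell i = PiE {1..q} (\<lambda>k. {xg k (i k - 1)..xg k (i k)})"

definition u_inv :: "nat \<Rightarrow> nat \<Rightarrow> real \<Rightarrow> real" where
  "u_inv k i = the_inv_into {0..1} (u k i)"

definition U :: "(nat \<Rightarrow> nat) \<Rightarrow> (nat \<Rightarrow> real) \<Rightarrow> nat \<Rightarrow> real" where
  "U i x = restrict (\<lambda>k. u k (i k) (x k)) {1..q}"

definition U_inv :: "(nat \<Rightarrow> nat) \<Rightarrow> (nat \<Rightarrow> real) \<Rightarrow> nat \<Rightarrow> real" where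
  "U_inv i y = restrict (\<lambda>k. u_inv k (i k) (y k)) {1..q}"

lemma xg_strict_mono: "k \<in> {1..q} \<Longrightarrow> a < b \<Longrightarrow> b \<le> M k \<Longrightarrow> xg k a < xg k b"
proof (induction b)
  case (Suc b)
  then show ?case
    using grid_mono[of k b] by (cases "a = b") auto
qed simp

lemma xg_mono: "k \<in> {1..q} \<Longrightarrow> a \<le> b \<Longrightarrow> b \<le> M k \<Longrightarrow> xg k a \<le> xg k b"
  using xg_strict_mono[of k a b] by (cases "a = b") auto

lemma xg_in_unit: "k \<in> {1..q} \<Longrightarrow> j \<le> M k \<Longrightarrow> xg k j \<in> {0..1}"
  using xg_mono[of k 0 j] xg_mono[of k j "M k"] grid0 grid1 by auto

lemma homeomorphism_u:
  "k \<in> {1..q} \<Longrightarrow> i \<in> {1..M k} \<Longrightarrow>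
    homeomorphism {0..1} {xg k (i - 1)..xg k i} (u k i) (u_inv k i)"
  using u_homeo homeomorphism_the_inv_into unfolding u_inv_def by blast

lemma u_inv_endpoints:
  assumes "k \<in> {1..q}" "i \<in> {1..M k}"
  shows "u_inv k i (xg k i) = (if odd i then 1 else 0)"
    and "u_inv k i (xg k (i - 1)) = (if odd i then 0 else 1)"
  using homeomorphism_apply1[OF homeomorphism_u[OF assms], of 0]
    homeomorphism_apply1[OF homeomorphism_u[OF assms], of 1] u_odd[OF assms] u_even[OF assms]
  by auto

lemma adjacent_intervals_overlap:
  assumes k: "k \<in> {1..q}" and "i' \<le> M k" and "i < i'"
    and "t \<in> {xg k (i - 1)..xg k i}" and "t \<in> {xg k (i' - 1)..xg k i'}"
  shows "i' = Suc i \<and> t = xg k i"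
proof -
  have "\<not> i < i' - 1"
  proof
    assume "i < i' - 1"
    then have "xg k i < xg k (i' - 1)"
      using xg_strict_mono[OF k] \<open>i' \<le> M k\<close> by simp
    then show False using assms(4,5) by simp
  qed
  then have "i' = Suc i" using assms by auto
  then show ?thesis using assms by auto
qed

lemma u_inv_eq_on_overlap:
  assumes k: "k \<in> {1..q}" and i: "i \<in> {1..M k}" and i': "i' \<in> {1..M k}"
    and t: "t \<in> {xg k (i - 1)..xg k i}" "t \<in> {xg k (i' - 1)..xg k i'}"
  shows "u_inv k i t = u_inv k i' t"
proof (cases i i' rule: linorder_cases)
  case less
  then have "i' = Suc i \<and> t = xg k i"
    using adjacent_intervals_overlap[OF k _ less t] i' by auto
  then show ?thesis
    using u_inv_endpoints[OF k i] u_inv_endpoints[OF k i'] by auto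
next
  case greater
  then have "i = Suc i' \<and> t = xg k i'"
    using adjacent_intervals_overlap[OF k _ greater t(2,1)] i by auto
  then show ?thesis
    using u_inv_endpoints[OF k i] u_inv_endpoints[OF k i'] by auto
qed simp

lemma homeomorphism_U:
  assumes "i \<in> cell_indices"
  shows "homeomorphism (cube q) (cell i) (U i) (U_inv i)"
  unfolding cube_def cell_def U_def[abs_def] U_inv_def[abs_def]
  by (rule homeomorphism_PiE, rule homeomorphism_u) (use assms in auto)

lemma cell_subset_cube:
  assumes i: "i \<in> cell_indices"
  shows "cell i \<subseteq> cube q"
proof
  fix y assume y: "y \<in> cell i"
  have "y k \<in> {0..1}" if k: "k \<in> {1..q}" for k
  proof -
    have "i k \<le> M k" using i k by auto
    moreover have "y k \<in> {xg k (i k - 1)..xg k (i k)}"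
      using y k by (auto simp: cell_def)
    ultimately show ?thesis
      using xg_in_unit[OF k, of "i k - 1"] xg_in_unit[OF k, of "i k"] by fastforce
  qed
  then show "y \<in> cube q"
    using y by (auto simp: cell_def cube_def PiE_iff)
qed

lemma unit_interval_covered:
  assumes k: "k \<in> {1..q}" and t: "t \<in> {0..1}"
  shows "\<exists>i\<in>{1..M k}. t \<in> {xg k (i - 1)..xg k i}"
proof -
  define P where "P i \<longleftrightarrow> 1 \<le> i \<and> t \<le> xg k i" for i
  have PM: "P (M k)" using M[OF k] grid1[OF k] t by (auto simp: P_def)
  define i where "i = Least P"
  have Pi: "P i" and iM: "i \<le> M k"
    unfolding i_def by (rule LeastI[of P, OF PM], rule Least_le[of P, OF PM])
  have "xg k (i - 1) \<le> t"
  proof (cases "i = 1")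
    case True then show ?thesis using grid0[OF k] t by simp
  next
    case False
    then have "i - 1 < i" "1 \<le> i - 1" using Pi by (auto simp: P_def)
    have "\<not> P (i - 1)"
      using \<open>i - 1 < i\<close> unfolding i_def by (rule not_less_Least)
    then show ?thesis using \<open>1 \<le> i - 1\<close> by (auto simp: P_def)
  qed
  then show ?thesis using Pi iM by (auto simp: P_def)
qed

lemma cube_eq_Union_cells: "cube q = (\<Union>i\<in>cell_indices. cell i)"
proof
  show "cube q \<subseteq> (\<Union>i\<in>cell_indices. cell i)"
  proof
    fix y assume y: "y \<in> cube q"
    then have "\<forall>k\<in>{1..q}. \<exists>i\<in>{1..M k}. y k \<in> {xg k (i - 1)..xg k i}"
      by (intro ballI unit_interval_covered) (auto simp: cube_def)
    then obtain f where f: "\<forall>k\<in>{1..q}. f k \<in> {1..M k} \<and> y k \<in> {xg k (f k - 1)..xg k (f k)}"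
      by metis
    then have "restrict f {1..q} \<in> cell_indices" and "y \<in> cell (restrict f {1..q})"
      using y by (auto simp: cell_def cube_def PiE_iff)
    then show "y \<in> (\<Union>i\<in>cell_indices. cell i)" by blast
  qed
  show "(\<Union>i\<in>cell_indices. cell i) \<subseteq> cube q"
    using cell_subset_cube by blast
qed

lemma closed_cell: "closed (cell i)"
  unfolding cell_def by (rule closed_PiE) simp

lemma U_inv_eq_on_overlap:
  assumes "i \<in> cell_indices" "j \<in> cell_indices" "y \<in> cell i" "y \<in> cell j"
  shows "U_inv i y = U_inv j y"
  unfolding U_inv_def by (intro restrict_ext u_inv_eq_on_overlap) (use assms in \<open>auto simp: cell_def\<close>)

end


locale fractal_interpolation = grid_maps q M xg u
  for q :: nat
    and M :: "nat \<Rightarrow> nat"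
    and xg :: "nat \<Rightarrow> nat \<Rightarrow> real"
    and u :: "nat \<Rightarrow> nat \<Rightarrow> real \<Rightarrow> real" +
  fixes z :: "(nat \<Rightarrow> nat) \<Rightarrow> real"
    and F :: "(nat \<Rightarrow> nat) \<Rightarrow> (nat \<Rightarrow> real) \<Rightarrow> real \<Rightarrow> real"
  assumes F_cont: "\<And>i. i \<in> PiE {1..q} (\<lambda>k. {1..M k}) \<Longrightarrow>
        continuous_on (cube q \<times> UNIV) (\<lambda>(x, w). F i x w)"
    and F_vert: "\<And>i e. i \<in> PiE {1..q} (\<lambda>k. {1..M k}) \<Longrightarrow> e \<in> PiE {1..q} (\<lambda>j. {0, M j}) \<Longrightarrow>
        F i (restrict (\<lambda>j. xg j (e j)) {1..q}) (z e) = z (restrict (\<lambda>j. eta (i j) (e j)) {1..q})"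
    and F_contr: "\<And>i. i \<in> PiE {1..q} (\<lambda>k. {1..M k}) \<Longrightarrow>
        \<exists>\<gamma>. 0 < \<gamma> \<and> \<gamma> < 1 \<and>
          (\<forall>x\<in>cube q. \<forall>a b. \<bar>F i x a - F i x b\<bar> \<le> \<gamma> * \<bar>a - b\<bar>)"
    and F_match: "\<And>k i x w. k \<in> {1..q} \<Longrightarrow> i \<in> PiE {1..q} (\<lambda>k. {1..M k}) \<Longrightarrow>
        i k \<in> {1..M k - 1} \<Longrightarrow> x \<in> cube q \<Longrightarrow>
        F i (x(k := the_inv_into {0..1} (u k (i k)) (xg k (i k)))) w =
        F (i(k := Suc (i k))) (x(k := the_inv_into {0..1} (u k (i k)) (xg k (i k)))) w"
begin

lemma F_eq_across_face:
  assumes i: "i \<in> cell_indices" and j: "j \<in> cell_indices" and k: "k \<in> {1..q}" and less: "i k < j k"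
    and same: "\<And>l. l \<noteq> k \<Longrightarrow> i l = j l" and y: "y \<in> cell i" "y \<in> cell j"
  shows "F i (U_inv i y) w = F j (U_inv j y) w"
proof -
  have "y k \<in> {xg k (i k - 1)..xg k (i k)}" "y k \<in> {xg k (j k - 1)..xg k (j k)}"
    using y k by (auto simp: cell_def)
  moreover have jM: "j k \<le> M k" using j k by auto
  ultimately have jk: "j k = Suc (i k)" and yk: "y k = xg k (i k)"
    using adjacent_intervals_overlap[OF k _ less] by blast+
  have ik: "i k \<in> {1..M k - 1}" using i k jk jM by auto
  have j_eq: "j = i(k := Suc (i k))"
    using same jk by auto
  define x where "x = U_inv i y"
  have x: "x \<in> cube q"
    using homeomorphism_image2[OF homeomorphism_U[OF i]] y(1) by (auto simp: x_def)
  have "x(k := the_inv_into {0..1} (u k (i k)) (xg k (i k))) = x"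
    using k yk by (auto simp: x_def U_inv_def u_inv_def)
  moreover have "U_inv j y = x"
    using U_inv_eq_on_overlap[OF j i y(2,1)] by (simp add: x_def)
  ultimately show ?thesis
    using F_match[OF k i ik x, of w] j_eq by (simp add: x_def)
qed

lemma F_eq_on_overlap_one_coordinate:
  assumes i: "i \<in> cell_indices" and j: "j \<in> cell_indices" and same: "\<And>l. l \<noteq> k \<Longrightarrow> i l = j l"
    and y: "y \<in> cell i" "y \<in> cell j"
  shows "F i (U_inv i y) w = F j (U_inv j y) w"
proof (cases "i k = j k")
  case True
  with same have "i = j" by (metis ext)
  then show ?thesis by simp
next
  case False
  have k: "k \<in> {1..q}"
  proof (rule ccontr)
    assume "k \<notin> {1..q}"
    then show False using False PiE_arb[OF i] PiE_arb[OF j] by metis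
  qed
  from False consider "i k < j k" | "j k < i k" by linarith
  then show ?thesis
  proof cases
    case 1
    show ?thesis by (rule F_eq_across_face[OF i j k 1 same y])
  next
    case 2
    show ?thesis by (rule F_eq_across_face[OF j i k 2 _ y(2,1), symmetric]) (simp add: same)
  qed
qed

lemma F_eq_on_overlap_differing_within:
  assumes "finite D" and "{k. i k \<noteq> j k} \<subseteq> D" and "i \<in> cell_indices" "j \<in> cell_indices"
    and "y \<in> cell i" "y \<in> cell j"
  shows "F i (U_inv i y) w = F j (U_inv j y) w"
  using assms
proof (induction D arbitrary: i j rule: finite_induct)
  case empty
  then have "i = j" by (auto simp: fun_eq_iff)
  then show ?case by simp
next
  case (insert k D)
  define h where "h = j(k := i k)"
  have h: "h \<in> cell_indices" and yh: "y \<in> cell h"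
    using insert.prems by (auto simp: h_def cell_def PiE_iff extensional_def)
  have "{l. i l \<noteq> h l} \<subseteq> D"
    using insert.prems(1) insert.hyps(2) by (auto simp: h_def)
  then have "F i (U_inv i y) w = F h (U_inv h y) w"
    using insert.IH insert.prems h yh by blast
  also have "\<dots> = F j (U_inv j y) w"
    by (rule F_eq_on_overlap_one_coordinate[where k = k, OF h insert.prems(3) _ yh insert.prems(5)])
      (simp add: h_def)
  finally show ?case .
qed

lemma F_eq_on_overlap:
  assumes "i \<in> cell_indices" "j \<in> cell_indices" "y \<in> cell i" "y \<in> cell j"
  shows "F i (U_inv i y) w = F j (U_inv j y) w"
proof (rule F_eq_on_overlap_differing_within[OF finite_atLeastAtMost _ assms])
  show "{k. i k \<noteq> j k} \<subseteq> {1..q}"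
  proof
    fix k assume k: "k \<in> {k. i k \<noteq> j k}"
    show "k \<in> {1..q}"
    proof (rule ccontr)
      assume "k \<notin> {1..q}"
      then have "i k = j k"
        using PiE_arb[OF assms(1)] PiE_arb[OF assms(2)] by simp
      then show False using k by simp
    qed
  qed
qed

definition cell_of :: "(nat \<Rightarrow> real) \<Rightarrow> nat \<Rightarrow> nat" where
  "cell_of y = (SOME i. i \<in> cell_indices \<and> y \<in> cell i)"

text \<open>The Read-Bajraktarevic operator; by \<open>F_eq_on_overlap\<close> the choice of cell containing
  \<open>y\<close> does not matter (\<open>RB_on_cell\<close>).\<close>
definition RB :: "((nat \<Rightarrow> real) \<Rightarrow> real) \<Rightarrow> (nat \<Rightarrow> real) \<Rightarrow> real" where
  "RB a y = (if y \<in> cube q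
     then F (cell_of y) (U_inv (cell_of y) y) (a (U_inv (cell_of y) y)) else undefined)"

lemma cell_of:
  assumes "y \<in> cube q"
  shows "cell_of y \<in> cell_indices \<and> y \<in> cell (cell_of y)"
proof -
  have "y \<in> (\<Union>i\<in>cell_indices. cell i)"
    using assms cube_eq_Union_cells by simp
  then have "\<exists>i. i \<in> cell_indices \<and> y \<in> cell i" by blast
  then show ?thesis
    unfolding cell_of_def by (rule someI_ex)
qed

lemma RB_on_cell:
  assumes i: "i \<in> cell_indices" and y: "y \<in> cell i"
  shows "RB a y = F i (U_inv i y) (a (U_inv i y))"
proof -
  have "y \<in> cube q" using cell_subset_cube[OF i] y by blast
  with cell_of have c: "cell_of y \<in> cell_indices" "y \<in> cell (cell_of y)" by blast+
  then have "U_inv (cell_of y) y = U_inv i y"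
    using U_inv_eq_on_overlap i y by blast
  then show ?thesis
    using \<open>y \<in> cube q\<close> F_eq_on_overlap[OF c(1) i c(2) y] by (simp add: RB_def)
qed

lemma RB_U:
  assumes i: "i \<in> cell_indices" and x: "x \<in> cube q"
  shows "RB a (U i x) = F i x (a x)"
proof -
  have "U i x \<in> cell i" and "U_inv i (U i x) = x"
    using homeomorphism_image1[OF homeomorphism_U[OF i]] homeomorphism_apply1[OF homeomorphism_U[OF i] x]
      x by auto
  then show ?thesis using RB_on_cell[OF i] by simp
qed

lemma continuous_on_RB:
  assumes a: "continuous_on (cube q) a"
  shows "continuous_on (cube q) (RB a)"
proof -
  have "continuous_on (\<Union>i\<in>cell_indices. cell i) (RB a)"
  proof (rule continuous_on_closed_Union)
    fix i assume i: "i \<in> cell_indices"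
    note hom = homeomorphism_U[OF i]
    have "continuous_on (cell i) (\<lambda>y. (U_inv i y, a (U_inv i y)))"
      by (intro continuous_on_Pair homeomorphism_cont2[OF hom]
          continuous_on_compose2[OF a homeomorphism_cont2[OF hom]])
        (use homeomorphism_image2[OF hom] in auto)
    then have "continuous_on (cell i) (\<lambda>y. (\<lambda>(x, w). F i x w) (U_inv i y, a (U_inv i y)))"
      by (rule continuous_on_compose2[OF F_cont[OF i]]) (use homeomorphism_image2[OF hom] in auto)
    then show "continuous_on (cell i) (RB a)"
      by (rule continuous_on_eq) (simp add: RB_on_cell[OF i])
  qed (auto simp: closed_cell finite_PiE)
  then show ?thesis using cube_eq_Union_cells by simp
qed

lemma uniform_contraction_factor:
  obtains \<gamma> where "0 \<le> \<gamma>" "\<gamma> < 1"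
    "\<And>i x a b. i \<in> cell_indices \<Longrightarrow> x \<in> cube q \<Longrightarrow>
      \<bar>F i x a - F i x b\<bar> \<le> \<gamma> * \<bar>a - b\<bar>"
proof -
  obtain \<gamma> where \<gamma>: "\<forall>i\<in>cell_indices. 0 < \<gamma> i \<and> \<gamma> i < 1 \<and>
      (\<forall>x\<in>cube q. \<forall>a b. \<bar>F i x a - F i x b\<bar> \<le> \<gamma> i * \<bar>a - b\<bar>)"
    using F_contr by metis
  define g where "g = Max (insert 0 (\<gamma> ` cell_indices))"
  have fin: "finite (insert 0 (\<gamma> ` cell_indices))" by (simp add: finite_PiE)
  show ?thesis
  proof
    show "0 \<le> g" unfolding g_def using fin by simp
    show "g < 1" unfolding g_def using fin \<gamma> by (simp add: Max_less_iff)
    fix i x a b assume "i \<in> cell_indices" "x \<in> cube q"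
    then have "\<bar>F i x a - F i x b\<bar> \<le> \<gamma> i * \<bar>a - b\<bar>" and "\<gamma> i \<le> g"
      using \<gamma> fin by (auto simp: g_def)
    then show "\<bar>F i x a - F i x b\<bar> \<le> g * \<bar>a - b\<bar>"
      by (meson abs_ge_zero mult_right_mono order_trans)
  qed
qed

lemma RB_unique_fixpoint:
  "\<exists>!A. A \<in> extensional (cube q) \<and> continuous_on (cube q) A \<and> RB A = A"
proof -
  obtain \<gamma> where \<gamma>: "0 \<le> \<gamma>" "\<gamma> < 1"
    and F_lip: "\<And>i x a b. i \<in> cell_indices \<Longrightarrow> x \<in> cube q \<Longrightarrow>
      \<bar>F i x a - F i x b\<bar> \<le> \<gamma> * \<bar>a - b\<bar>"
    using uniform_contraction_factor by blast
  define \<sigma> where "\<sigma> y = U_inv (cell_of y) y" for y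
  have \<sigma>: "\<sigma> \<in> cube q \<rightarrow> cube q"
  proof
    fix y assume "y \<in> cube q"
    with cell_of have "cell_of y \<in> cell_indices" "y \<in> cell (cell_of y)" by blast+
    then show "\<sigma> y \<in> cube q"
      using homeomorphism_image2[OF homeomorphism_U] unfolding \<sigma>_def by blast
  qed
  show ?thesis
  proof (rule continuous_fixpoint_of_contraction[OF compact_cube _ continuous_on_RB \<sigma> \<gamma>])
    show "RB a \<in> extensional (cube q)" for a
      by (simp add: RB_def extensional_def)
    show "dist (RB a y) (RB b y) \<le> \<gamma> * dist (a (\<sigma> y)) (b (\<sigma> y))" if y: "y \<in> cube q" for a b y
    proof -
      have "\<sigma> y \<in> cube q" using \<sigma> y by blast
      then show ?thesis
        using y F_lip[OF conjunct1[OF cell_of[OF y]]] by (simp add: RB_def \<sigma>_def dist_real_def)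
    qed
  qed
qed

lemma RB_fixpoint_iff:
  assumes "A \<in> extensional (cube q)"
  shows "RB A = A \<longleftrightarrow> (\<forall>i\<in>cell_indices. \<forall>x\<in>cube q. A (U i x) = F i x (A x))"
proof
  assume "RB A = A"
  then show "\<forall>i\<in>cell_indices. \<forall>x\<in>cube q. A (U i x) = F i x (A x)"
    using RB_U[of _ _ A] by simp
next
  assume fe: "\<forall>i\<in>cell_indices. \<forall>x\<in>cube q. A (U i x) = F i x (A x)"
  show "RB A = A"
  proof (rule extensionalityI[OF _ assms])
    show "RB A \<in> extensional (cube q)" by (simp add: RB_def extensional_def)
    fix y assume y: "y \<in> cube q"
    define i where "i = cell_of y"
    have i: "i \<in> cell_indices" and yi: "y \<in> cell i" using cell_of[OF y] by (simp_all add: i_def)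
    have Ux: "U i (U_inv i y) = y" and x: "U_inv i y \<in> cube q"
      using homeomorphism_apply2[OF homeomorphism_U[OF i] yi]
        homeomorphism_image2[OF homeomorphism_U[OF i]] yi by auto
    show "RB A y = A y"
      using RB_on_cell[OF i yi] fe[rule_format, OF i x] Ux by simp
  qed
qed

lemma self_similar_graph_iff_RB_fixpoint:
  assumes "A \<in> extensional (cube q)"
  shows "(\<lambda>x. (x, A x)) ` cube q =
      (\<Union>i\<in>cell_indices. (\<lambda>(x, w). (U i x, F i x w)) ` (\<lambda>x. (x, A x)) ` cube q)
    \<longleftrightarrow> RB A = A"
proof -
  have "(\<Union>i\<in>cell_indices. U i ` cube q) = cube q"
    using cube_eq_Union_cells homeomorphism_image1[OF homeomorphism_U] by simp
  from graph_eq_Union_image_iff[OF this] show ?thesis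
    unfolding RB_fixpoint_iff[OF assms] .
qed

definition node :: "(nat \<Rightarrow> nat) \<Rightarrow> nat \<Rightarrow> real" where
  "node j = restrict (\<lambda>k. xg k (j k)) {1..q}"

text \<open>Node \<open>j\<close> is the image of the corner \<open>parent_corner j\<close> under \<open>U (parent_index j)\<close>
  (\<open>U_parent\<close>); applying \<open>parent_corner\<close> twice reaches a corner that is its own parent.\<close>
definition parent_index :: "(nat \<Rightarrow> nat) \<Rightarrow> nat \<Rightarrow> nat" where
  "parent_index j = restrict (\<lambda>k. max 1 (j k)) {1..q}"

definition parent_corner :: "(nat \<Rightarrow> nat) \<Rightarrow> nat \<Rightarrow> nat" where
  "parent_corner j = restrict (\<lambda>k. if odd (j k) then M k else 0) {1..q}"

abbreviation node_indices :: "(nat \<Rightarrow> nat) set" where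
  "node_indices \<equiv> PiE {1..q} (\<lambda>k. {0..M k})"

abbreviation corner_indices :: "(nat \<Rightarrow> nat) set" where
  "corner_indices \<equiv> PiE {1..q} (\<lambda>k. {0, M k})"

lemma corner_indices_subset_node_indices: "corner_indices \<subseteq> node_indices"
  by (rule PiE_mono) auto

lemma node_in_cube: "j \<in> node_indices \<Longrightarrow> node j \<in> cube q"
  using xg_in_unit by (auto simp: node_def cube_def PiE_iff)

lemma parent_index_in_cell_indices: "j \<in> node_indices \<Longrightarrow> parent_index j \<in> cell_indices"
  using M by (fastforce simp: parent_index_def PiE_iff)

lemma parent_corner_in_corner_indices: "parent_corner j \<in> corner_indices"
  by (auto simp: parent_corner_def PiE_iff)

lemma parent_corner_parent_corner_fixed:
  "parent_corner (parent_corner (parent_corner j)) = parent_corner (parent_corner j)"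
  by (auto simp: parent_corner_def)

lemma eta_parent:
  assumes "j \<in> node_indices"
  shows "restrict (\<lambda>k. eta (parent_index j k) (parent_corner j k)) {1..q} = j"
proof (rule extensionalityI[where A = "{1..q}"])
  fix k assume k: "k \<in> {1..q}"
  have "eta (max 1 (j k)) (if odd (j k) then M k else 0) = j k"
    using M[OF k] by (intro eta_max_1_parity) simp
  with k show "restrict (\<lambda>k. eta (parent_index j k) (parent_corner j k)) {1..q} k = j k"
    by (simp add: parent_index_def parent_corner_def)
qed (use assms in \<open>simp_all add: PiE_iff\<close>)

lemma u_at_corner:
  assumes k: "k \<in> {1..q}" and i: "i \<in> {1..M k}" and c: "c \<in> {0, M k}"
  shows "u k i (xg k c) = xg k (eta i c)"
  using u_odd[OF k i] u_even[OF k i] grid0[OF k] grid1[OF k] M[OF k] c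
  by (cases "odd i") (auto simp: eta_def)

lemma U_node_corner:
  assumes i: "i \<in> cell_indices" and c: "c \<in> corner_indices"
  shows "U i (node c) = node (restrict (\<lambda>k. eta (i k) (c k)) {1..q})"
  unfolding U_def node_def
proof (rule restrict_ext)
  fix k assume k: "k \<in> {1..q}"
  then have "i k \<in> {1..M k}" "c k \<in> {0, M k}" using i c by auto
  with k show "u k (i k) (restrict (\<lambda>k. xg k (c k)) {1..q} k) =
      xg k (restrict (\<lambda>k. eta (i k) (c k)) {1..q} k)"
    by (simp add: u_at_corner)
qed

lemma U_parent: "j \<in> node_indices \<Longrightarrow> U (parent_index j) (node (parent_corner j)) = node j"
  using U_node_corner[OF parent_index_in_cell_indices parent_corner_in_corner_indices] eta_parent by simp

lemma z_parent:
  "j \<in> node_indices \<Longrightarrow> F (parent_index j) (node (parent_corner j)) (z (parent_corner j)) = z j"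
  using F_vert[OF parent_index_in_cell_indices parent_corner_in_corner_indices] eta_parent by (simp add: node_def)

lemma RB_fixpoint_parent:
  assumes "RB A = A" "j \<in> node_indices"
  shows "A (node j) = F (parent_index j) (node (parent_corner j)) (A (node (parent_corner j)))"
proof -
  have "node (parent_corner j) \<in> cube q"
    using node_in_cube corner_indices_subset_node_indices parent_corner_in_corner_indices by blast
  from RB_U[OF parent_index_in_cell_indices[OF assms(2)] this, of A] show ?thesis
    using U_parent[OF assms(2)] assms(1) by simp
qed

lemma RB_fixpoint_interpolates:
  assumes fp: "RB A = A" and j: "j \<in> node_indices"
  shows "A (node j) = z j"
proof -
  have step: "A (node j) = z j" if "j \<in> node_indices" "A (node (parent_corner j)) = z (parent_corner j)" for j
    using RB_fixpoint_parent[OF fp that(1)] z_parent[OF that(1)] that(2) by simp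
  define c where "c = parent_corner (parent_corner j)"
  have pc_nodes: "parent_corner j \<in> node_indices" for j
    using corner_indices_subset_node_indices parent_corner_in_corner_indices by blast
  have c: "c \<in> node_indices" "parent_corner c = c"
    unfolding c_def by (rule pc_nodes, rule parent_corner_parent_corner_fixed)
  obtain \<gamma> where "\<gamma> < 1" and
    lip: "\<forall>x\<in>cube q. \<forall>a b.
      \<bar>F (parent_index c) x a - F (parent_index c) x b\<bar> \<le> \<gamma> * \<bar>a - b\<bar>"
    using F_contr[OF parent_index_in_cell_indices[OF c(1)]] by blast
  have eA: "F (parent_index c) (node c) (A (node c)) = A (node c)"
    and ez: "F (parent_index c) (node c) (z c) = z c"
    using RB_fixpoint_parent[OF fp c(1)] z_parent[OF c(1)] c(2) by simp_all
  have "\<bar>F (parent_index c) (node c) (A (node c)) - F (parent_index c) (node c) (z c)\<bar>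
      \<le> \<gamma> * \<bar>A (node c) - z c\<bar>"
    using lip node_in_cube[OF c(1)] by blast
  then have "\<bar>A (node c) - z c\<bar> \<le> \<gamma> * \<bar>A (node c) - z c\<bar>"
    by (simp only: eA ez)
  with \<open>\<gamma> < 1\<close> have "A (node c) = z c"
    by (smt (verit) abs_ge_zero mult_less_cancel_right2 abs_eq_0)
  then have "A (node (parent_corner j)) = z (parent_corner j)"
    unfolding c_def by (rule step[OF pc_nodes])
  then show ?thesis
    by (rule step[OF j])
qed

end

theorem theorem3p1:
  fixes q :: nat
    and M :: "nat \<Rightarrow> nat"
    and xg :: "nat \<Rightarrow> nat \<Rightarrow> real"
    and z :: "(nat \<Rightarrow> nat) \<Rightarrow> real"
    and u :: "nat \<Rightarrow> nat \<Rightarrow> real \<Rightarrow> real"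
    and F :: "(nat \<Rightarrow> nat) \<Rightarrow> (nat \<Rightarrow> real) \<Rightarrow> real \<Rightarrow> real"
  assumes q: "q \<ge> 1"
    and M: "\<And>k. k \<in> {1..q} \<Longrightarrow> M k \<ge> 2"
    and grid0: "\<And>k. k \<in> {1..q} \<Longrightarrow> xg k 0 = 0"
    and grid1: "\<And>k. k \<in> {1..q} \<Longrightarrow> xg k (M k) = 1"
    and grid_mono: "\<And>k i. k \<in> {1..q} \<Longrightarrow> i < M k \<Longrightarrow> xg k i < xg k (Suc i)"
    and u_homeo: "\<And>k i. k \<in> {1..q} \<Longrightarrow> i \<in> {1..M k} \<Longrightarrow>
        \<exists>g. homeomorphism {0..1} {xg k (i - 1)..xg k i} (u k i) g"
    and u_contr: "\<And>k i. k \<in> {1..q} \<Longrightarrow> i \<in> {1..M k} \<Longrightarrow>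
        \<exists>\<mu>. 0 < \<mu> \<and> \<mu> < 1 \<and>
          (\<forall>a\<in>{0..1}. \<forall>b\<in>{0..1}. \<bar>u k i a - u k i b\<bar> \<le> \<mu> * \<bar>a - b\<bar>)"
    and u_odd: "\<And>k i. k \<in> {1..q} \<Longrightarrow> i \<in> {1..M k} \<Longrightarrow> odd i \<Longrightarrow>
        u k i 0 = xg k (i - 1) \<and> u k i 1 = xg k i"
    and u_even: "\<And>k i. k \<in> {1..q} \<Longrightarrow> i \<in> {1..M k} \<Longrightarrow> even i \<Longrightarrow>
        u k i 0 = xg k i \<and> u k i 1 = xg k (i - 1)"
    and F_cont: "\<And>i. i \<in> PiE {1..q} (\<lambda>k. {1..M k}) \<Longrightarrow>
        continuous_on (cube q \<times> UNIV) (\<lambda>(x, w). F i x w)"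
    and F_vert: "\<And>i e. i \<in> PiE {1..q} (\<lambda>k. {1..M k}) \<Longrightarrow> e \<in> PiE {1..q} (\<lambda>j. {0, M j}) \<Longrightarrow>
        F i (restrict (\<lambda>j. xg j (e j)) {1..q}) (z e) = z (restrict (\<lambda>j. eta (i j) (e j)) {1..q})"
    and F_contr: "\<And>i. i \<in> PiE {1..q} (\<lambda>k. {1..M k}) \<Longrightarrow>
        \<exists>\<gamma>. 0 < \<gamma> \<and> \<gamma> < 1 \<and>
          (\<forall>x\<in>cube q. \<forall>a b. \<bar>F i x a - F i x b\<bar> \<le> \<gamma> * \<bar>a - b\<bar>)"
    and F_match: "\<And>k i x w. k \<in> {1..q} \<Longrightarrow> i \<in> PiE {1..q} (\<lambda>k. {1..M k}) \<Longrightarrow>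
        i k \<in> {1..M k - 1} \<Longrightarrow> x \<in> cube q \<Longrightarrow>
        F i (x(k := the_inv_into {0..1} (u k (i k)) (xg k (i k)))) w =
        F (i(k := Suc (i k))) (x(k := the_inv_into {0..1} (u k (i k)) (xg k (i k)))) w"
  shows "(\<exists>!A. A \<in> extensional (cube q) \<and> continuous_on (cube q) A \<and>
            (\<lambda>x. (x, A x)) ` cube q =
            (\<Union>i\<in>PiE {1..q} (\<lambda>k. {1..M k}).
               (\<lambda>(x, w). (restrict (\<lambda>k. u k (i k) (x k)) {1..q}, F i x w)) ` ((\<lambda>x. (x, A x)) ` cube q)))
      \<and> (\<forall>A. A \<in> extensional (cube q) \<and> continuous_on (cube q) A \<and>
            (\<lambda>x. (x, A x)) ` cube q =
            (\<Union>i\<in>PiE {1..q} (\<lambda>k. {1..M k}).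
               (\<lambda>(x, w). (restrict (\<lambda>k. u k (i k) (x k)) {1..q}, F i x w)) ` ((\<lambda>x. (x, A x)) ` cube q))
          \<longrightarrow> (\<forall>j\<in>PiE {1..q} (\<lambda>k. {0..M k}). A (restrict (\<lambda>k. xg k (j k)) {1..q}) = z j))"
proof -
  interpret fractal_interpolation q M xg u z F
    by unfold_locales (fact M grid0 grid1 grid_mono u_homeo u_odd u_even F_cont F_vert F_contr F_match)+
  have self_similar_iff: "(A \<in> extensional (cube q) \<and> continuous_on (cube q) A \<and>
      (\<lambda>x. (x, A x)) ` cube q =
        (\<Union>i\<in>PiE {1..q} (\<lambda>k. {1..M k}).
           (\<lambda>(x, w). (restrict (\<lambda>k. u k (i k) (x k)) {1..q}, F i x w)) ` ((\<lambda>x. (x, A x)) ` cube q)))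
      \<longleftrightarrow> A \<in> extensional (cube q) \<and> continuous_on (cube q) A \<and> RB A = A" for A
    using self_similar_graph_iff_RB_fixpoint[of A] unfolding U_def by blast
  show ?thesis
    unfolding self_similar_iff
    using RB_unique_fixpoint RB_fixpoint_interpolates unfolding node_def by blast
qed

end
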